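(* Let $f\colon[0,1]\to\mathbb{R}$ be continuous. For natural $n$ let $x_n:=\sum_{k=1}^{n-1} f\big(\tfrac kn\big)$ and $y_n:=x_{n+1}-x_n$. If $\lim_{n\to\infty} y_n$ exists, then $\lim_{n\to\infty} y_n=\int_0^1 f(x)\,dx$. *)

theory Defs
  imports "HOL-Analysis.Analysis"
begin

end

theory Submission
  imports Defs
begin

text \<open>The differences \<open>y\<^sub>m = x\<^sub>m\<^sub>+\<^sub>1 - x\<^sub>m\<close> telescope, so \<open>x\<^sub>n / n\<close> is the
  Cesaro mean of \<open>y\<^sub>0, \<dots>, y\<^sub>n\<^sub>-\<^sub>1\<close> and tends to \<open>L\<close>. On the other hand
  \<open>x\<^sub>n / n + f(1) / n\<close> is the right-endpoint Riemann sum of \<open>f\<close> for the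
  uniform partition of \<open>[0,1]\<close> into \<open>n\<close> pieces, which tends to the integral of \<open>f\<close>
  by uniform continuity.\<close>

lemma LIMSEQ_cesaro_mean_0:
  fixes z :: "nat \<Rightarrow> 'a::real_normed_field"
  assumes "z \<longlonglongrightarrow> 0"
  shows "(\<lambda>n. (\<Sum>m<n. z m) / of_nat n) \<longlonglongrightarrow> 0"
  unfolding tendsto_iff
proof (intro allI impI)
  fix e :: real
  assume "e > 0"
  then obtain N where N: "\<And>m. m \<ge> N \<Longrightarrow> norm (z m) < e / 2"
    using LIMSEQ_D[OF assms, of "e / 2"] by auto
  define C where "C = (\<Sum>m<N. norm (z m))"
  have "\<forall>\<^sub>F n in sequentially. 2 * C / e < real n"
    by (rule eventually_compose_filterlim[OF eventually_gt_at_top filterlim_real_sequentially])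
  with eventually_ge_at_top[of N] eventually_gt_at_top[of 0]
  show "\<forall>\<^sub>F n in sequentially. dist ((\<Sum>m<n. z m) / of_nat n) 0 < e"
  proof eventually_elim
    case (elim n)
    have "norm (\<Sum>m<n. z m) \<le> (\<Sum>m<n. norm (z m))"
      by (rule norm_sum)
    also have "\<dots> = C + (\<Sum>m=N..<n. norm (z m))"
      using elim sum.atLeastLessThan_concat[of 0 N n "\<lambda>m. norm (z m)"]
      by (simp add: C_def lessThan_atLeast0)
    also have "\<dots> \<le> C + real (n - N) * (e / 2)"
      using sum_bounded_above[of "{N..<n}" "\<lambda>m. norm (z m)" "e / 2"] N by fastforce
    also have "\<dots> < real n * e"
    proof -
      have "C < real n * (e / 2)"
        using elim \<open>e > 0\<close> by (simp add: field_simps)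
      moreover have "real (n - N) * (e / 2) \<le> real n * (e / 2)"
        using \<open>e > 0\<close> by (intro mult_right_mono) auto
      ultimately show ?thesis
        by linarith
    qed
    finally show ?case
      using elim by (simp add: dist_norm norm_divide divide_less_eq mult.commute)
  qed
qed

lemma LIMSEQ_cesaro_mean:
  fixes y :: "nat \<Rightarrow> 'a::real_normed_field"
  assumes "y \<longlonglongrightarrow> L"
  shows "(\<lambda>n. (\<Sum>m<n. y m) / of_nat n) \<longlonglongrightarrow> L"
proof -
  have "(\<lambda>n. (\<Sum>m<n. y m - L) / of_nat n + L) \<longlonglongrightarrow> 0 + L"
    using assms by (intro tendsto_add LIMSEQ_cesaro_mean_0) (auto simp: LIM_zero)
  moreover have "\<forall>\<^sub>F n in sequentially.
      (\<Sum>m<n. y m - L) / of_nat n + L = (\<Sum>m<n. y m) / of_nat n"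
    using eventually_gt_at_top[of 0] by eventually_elim (simp add: sum_subtractf field_simps)
  ultimately show ?thesis
    by (simp add: tendsto_cong)
qed

lemma integral_sum_consecutive:
  fixes f :: "real \<Rightarrow> 'a::banach" and t :: "nat \<Rightarrow> real"
  assumes "mono t" and "f integrable_on {t 0..t n}"
  shows "integral {t 0..t n} f = (\<Sum>k<n. integral {t k..t (Suc k)} f)"
  using assms(2)
proof (induction n)
  case (Suc n)
  have le: "t 0 \<le> t n" "t n \<le> t (Suc n)"
    using \<open>mono t\<close> by (auto simp: mono_def)
  then have "f integrable_on {t 0..t n}"
    using Suc.prems integrable_subinterval_real by fastforce
  moreover have "integral {t 0..t (Suc n)} f = integral {t 0..t n} f + integral {t n..t (Suc n)} f"
    using Henstock_Kurzweil_Integration.integral_combine[OF le Suc.prems] by simp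
  ultimately show ?case
    using Suc.IH by simp
qed simp

lemma integral_approx_by_const:
  fixes f :: "real \<Rightarrow> real"
  assumes "a \<le> b" and "continuous_on {a..b} f"
    and "\<And>x. x \<in> {a..b} \<Longrightarrow> \<bar>f x - c\<bar> \<le> \<epsilon>"
  shows "\<bar>integral {a..b} f - c * (b - a)\<bar> \<le> \<epsilon> * (b - a)"
proof -
  have "integral {a..b} (\<lambda>x. f x - c) = integral {a..b} f - c * (b - a)"
    using assms(1,2) by (simp add: integral_diff integrable_continuous_real)
  moreover have "norm (integral {a..b} (\<lambda>x. f x - c)) \<le> \<epsilon> * (b - a)"
    using assms by (intro integral_bound continuous_intros) auto
  ultimately show ?thesis
    by simp
qed

lemma riemann_sum_right_approx:
  fixes f :: "real \<Rightarrow> real"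
  assumes "a \<le> b" and "n > 0" and f: "continuous_on {a..b} f"
    and osc: "\<And>x y. x \<in> {a..b} \<Longrightarrow> y \<in> {a..b} \<Longrightarrow> \<bar>x - y\<bar> \<le> (b - a) / real n
      \<Longrightarrow> \<bar>f x - f y\<bar> \<le> \<epsilon>"
  shows "\<bar>(b - a) / real n * (\<Sum>k<n. f (a + real (Suc k) * ((b - a) / real n)))
      - integral {a..b} f\<bar> \<le> \<epsilon> * (b - a)"
proof -
  define h where "h = (b - a) / real n"
  define t where "t k = a + real k * h" for k
  have "h \<ge> 0"
    using assms by (simp add: h_def)
  then have "mono t"
    by (auto simp: mono_def t_def intro: mult_right_mono)
  have t_step: "t (Suc k) - t k = h" for k
    by (simp add: t_def algebra_simps)
  have t_bounds: "t 0 = a" "t n = b"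
    using \<open>n > 0\<close> by (simp_all add: t_def h_def)
  have t_in: "t k \<in> {a..b}" if "k \<le> n" for k
  proof -
    have "real k * h \<le> real n * h"
      using that \<open>h \<ge> 0\<close> by (intro mult_right_mono) auto
    then show ?thesis
      using \<open>h \<ge> 0\<close> t_bounds by (auto simp: t_def)
  qed
  have "integral {a..b} f = (\<Sum>k<n. integral {t k..t (Suc k)} f)"
    using integral_sum_consecutive[OF \<open>mono t\<close>, of f n] f t_bounds
    by (simp add: integrable_continuous_real)
  then have "\<bar>h * (\<Sum>k<n. f (t (Suc k))) - integral {a..b} f\<bar>
      = \<bar>\<Sum>k<n. integral {t k..t (Suc k)} f - f (t (Suc k)) * (t (Suc k) - t k)\<bar>"
    by (simp add: t_step sum_distrib_left sum_subtractf abs_minus_commute mult.commute)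
  also have "\<dots>
      \<le> (\<Sum>k<n. \<bar>integral {t k..t (Suc k)} f - f (t (Suc k)) * (t (Suc k) - t k)\<bar>)"
    by (rule sum_abs)
  also have "\<dots> \<le> (\<Sum>k<n. \<epsilon> * h)"
  proof (rule sum_mono)
    fix k
    assume "k \<in> {..<n}"
    then have sub: "{t k..t (Suc k)} \<subseteq> {a..b}"
      using t_in[of k] t_in[of "Suc k"] by auto
    have "\<bar>f x - f (t (Suc k))\<bar> \<le> \<epsilon>" if "x \<in> {t k..t (Suc k)}" for x
      using that sub t_step[of k] t_in[of "Suc k"] \<open>k \<in> {..<n}\<close>
      by (intro osc) (auto simp: h_def)
    then show "\<bar>integral {t k..t (Suc k)} f - f (t (Suc k)) * (t (Suc k) - t k)\<bar>
        \<le> \<epsilon> * h"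
      using integral_approx_by_const[OF _ continuous_on_subset[OF f sub]] t_step[of k] \<open>h \<ge> 0\<close>
      by (metis diff_ge_0_iff_ge)
  qed
  also have "\<dots> = \<epsilon> * (b - a)"
    using \<open>n > 0\<close> by (simp add: h_def)
  finally show ?thesis
    by (simp add: h_def t_def)
qed

lemma riemann_sum_right_LIMSEQ:
  fixes f :: "real \<Rightarrow> real"
  assumes "a \<le> b" and f: "continuous_on {a..b} f"
  shows "(\<lambda>n. (b - a) / real n * (\<Sum>k<n. f (a + real (Suc k) * ((b - a) / real n))))
    \<longlonglongrightarrow> integral {a..b} f" (is "?R \<longlonglongrightarrow> ?I")
  unfolding tendsto_iff
proof (intro allI impI)
  fix e :: real
  assume "e > 0"
  define \<epsilon> where "\<epsilon> = e / (b - a + 1)"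
  have "\<epsilon> > 0" and "\<epsilon> * (b - a) < e"
    using \<open>e > 0\<close> \<open>a \<le> b\<close> by (simp_all add: \<epsilon>_def field_simps)
  obtain d where "d > 0"
    and d: "\<And>x y. x \<in> {a..b} \<Longrightarrow> y \<in> {a..b} \<Longrightarrow> dist y x < d
      \<Longrightarrow> dist (f y) (f x) < \<epsilon>"
    using compact_uniformly_continuous[OF f compact_Icc] \<open>\<epsilon> > 0\<close>
    unfolding uniformly_continuous_on_def by metis
  have "\<forall>\<^sub>F n in sequentially. (b - a) / real n < d"
    using order_tendstoD(2)[OF lim_const_over_n \<open>d > 0\<close>] .
  with eventually_gt_at_top[of 0]
  show "\<forall>\<^sub>F n in sequentially. dist (?R n) ?I < e"
  proof eventually_elim
    case (elim n)
    have "\<bar>?R n - ?I\<bar> \<le> \<epsilon> * (b - a)"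
    proof (rule riemann_sum_right_approx[OF \<open>a \<le> b\<close> \<open>n > 0\<close> f])
      fix x y
      assume "x \<in> {a..b}" "y \<in> {a..b}" "\<bar>x - y\<bar> \<le> (b - a) / real n"
      then show "\<bar>f x - f y\<bar> \<le> \<epsilon>"
        using d[of y x] elim by (simp add: dist_real_def)
    qed
    then show ?case
      using \<open>\<epsilon> * (b - a) < e\<close> by (simp add: dist_real_def)
  qed
qed

lemma riemann_sum_interior_points_LIMSEQ:
  fixes f :: "real \<Rightarrow> real"
  assumes "continuous_on {0..1} f"
  shows "(\<lambda>n. (\<Sum>k=1..<n. f (real k / real n)) / real n) \<longlonglongrightarrow> integral {0..1} f"
proof -
  have "(\<lambda>n. 1 / real n * (\<Sum>k<n. f (real (Suc k) / real n)) - f 1 / real n)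
      \<longlonglongrightarrow> integral {0..1} f - 0"
    using riemann_sum_right_LIMSEQ[of 0 1 f] assms by (intro tendsto_diff lim_const_over_n) simp
  moreover have "\<forall>\<^sub>F n in sequentially. 1 / real n * (\<Sum>k<n. f (real (Suc k) / real n)) - f 1 / real n
      = (\<Sum>k=1..<n. f (real k / real n)) / real n"
    using eventually_gt_at_top[of 0]
  proof eventually_elim
    case (elim n)
    then have "(\<Sum>k<n. f (real (Suc k) / real n)) = (\<Sum>k=1..<n. f (real k / real n)) + f 1"
      using sum.atLeast1_atMost_eq[of "\<lambda>k. f (real k / real n)" n, symmetric]
      by (simp add: sum.last_plus)
    then show ?case
      by (simp add: add_divide_distrib)
  qed
  ultimately show ?thesis
    by (simp add: Lim_transform_eventually)
qed

theorem proposition2: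
  fixes f :: "real \<Rightarrow> real" and L :: real
  assumes "continuous_on {0..1} f"
    and "(\<lambda>n. (\<Sum>k=1..<Suc n. f (real k / real (Suc n))) - (\<Sum>k=1..<n. f (real k / real n)))
           \<longlonglongrightarrow> L"
  shows "L = integral {0..1} f"
proof -
  define x where "x n = (\<Sum>k=1..<n. f (real k / real n))" for n
  have "(\<lambda>n. x (Suc n) - x n) \<longlonglongrightarrow> L"
    using assms(2) by (simp add: x_def)
  then have "(\<lambda>n. (\<Sum>m<n. x (Suc m) - x m) / real n) \<longlonglongrightarrow> L"
    by (rule LIMSEQ_cesaro_mean)
  moreover have "x 0 = 0"
    by (simp add: x_def)
  ultimately have "(\<lambda>n. x n / real n) \<longlonglongrightarrow> L"
    by (simp add: sum_lessThan_telescope)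
  moreover have "(\<lambda>n. x n / real n) \<longlonglongrightarrow> integral {0..1} f"
    unfolding x_def using assms(1) by (rule riemann_sum_interior_points_LIMSEQ)
  ultimately show ?thesis
    by (rule LIMSEQ_unique)
qed

end
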